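(* Let $j$ be a positive integer and $a$ an indeterminate (independent of $x$). Write $G(x)=\prod_{i=0}^{j-1}\frac{1+ax^2}{1+ix}=\sum_{N\ge0}G_Nx^N$ and $H(x)=\prod_{i=1-j}^{-1}\frac{1+ix}{1+ax^2}=\sum_{N\ge0}H_Nx^N$. Then for every $N\ge0$, \[G_N=\sum_{m=0}^{[N/2]}\binom{j}{m}Q_{N-2m}(j)\,a^m,\qquad H_N=\sum_{m=0}^{[N/2]}(-1)^N\binom{1-j}{m}\sigma_{N-2m}(j)\,a^m.\]
   Context: $\sigma_0(j)=1$, $\sigma_i(j)=\sum_{1\le n_1<\cdots<n_i\le j-1}n_1n_2\cdots n_i$ for $1\le i\le j-1$, $\sigma_i(j)=0$ for $i\ge j$; $Q_0(j)=1$, $Q_k(j)=-\sum_{i=1}^k\sigma_i(j)Q_{k-i}(j)$ for $k\ge1$. $\binom{\alpha}{m}=\alpha(\alpha-1)\cdots(\alpha-m+1)/m!$ is the generalized binomial coefficient, and $[x]$ is the integer part. *)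

theory Defs
  imports "HOL-Computational_Algebra.Formal_Power_Series"
begin

definition sigma :: "nat \<Rightarrow> nat \<Rightarrow> int" where
  "sigma i j = (if i = 0 then 1
     else if i \<le> j - 1 then
       (\<Sum>S \<in> {S. S \<subseteq> {1..j-1} \<and> card S = i}. int (\<Prod>S))
     else 0)"

fun Q :: "nat \<Rightarrow> nat \<Rightarrow> int" where
  "Q 0 j = 1"
| "Q (Suc k) j = - (\<Sum>i \<in> {1..Suc k}. sigma i j * Q (Suc k - i) j)"

end

(* Both products are a power of 1 + a x^2 times a product of linear factors:
   G = (1 + a x^2)^j / prod_{i=1}^{j-1} (1 + i x) and
   H = (1 + a x^2)^(1-j) * prod_{k=1}^{j-1} (1 - k x).
   The binomial series of (1 + a x^2)^e only has the even coefficients (e choose m) a^m,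
   so the N-th coefficient of such a product is a sum over shifts by 2m.  The coefficients
   of prod (1 + i x) are the sigma_k(j), hence those of its reciprocal satisfy the recursion
   defining Q_k(j); substituting -x for x gives the signed sigma_k(j) for H. *)

theory Submission
  imports Defs
begin

unbundle fps_syntax

lemma sum_even_indices:
  fixes F :: "nat \<Rightarrow> 'a::comm_monoid_add"
  shows "(\<Sum>i=0..N. if even i then F i else 0) = (\<Sum>m=0..N div 2. F (2*m))"
proof -
  have "(\<Sum>i=0..N. if even i then F i else 0) = sum F {i\<in>{0..N}. even i}"
    by (rule sum.inter_filter[symmetric]) simp
  also have "{i\<in>{0..N}. even i} = (\<lambda>m. 2*m) ` {0..N div 2}"
    by (auto simp: image_iff elim!: evenE)
  also have "sum F \<dots> = (\<Sum>m=0..N div 2. F (2*m))"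
    by (subst sum.reindex) (auto simp: inj_on_def)
  finally show ?thesis .
qed

lemma fps_compose_const_X2_nth:
  fixes c :: "'a::comm_ring_1"
  shows "(f oo (fps_const c * fps_X ^ 2)) $ n =
           (if even n then f $ (n div 2) * c ^ (n div 2) else 0)"
proof -
  have "(f oo (fps_const c * fps_X ^ 2)) $ n = (\<Sum>i=0..n. f $ i * (if n = 2*i then c ^ i else 0))"
    by (simp add: fps_compose_nth power_mult_distrib power_mult[symmetric])
       (auto intro: sum.cong)
  also have "\<dots> = (\<Sum>i=0..n. if i = n div 2 \<and> even n then f $ i * c ^ i else 0)"
    by (rule sum.cong) auto
  finally show ?thesis
    by (cases "even n") auto
qed

lemma fps_mult_compose_const_X2_nth:
  fixes c :: "'a::comm_ring_1"
  shows "((f oo (fps_const c * fps_X ^ 2)) * g) $ n =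
           (\<Sum>m=0..n div 2. f $ m * c ^ m * g $ (n - 2*m))"
proof -
  have "((f oo (fps_const c * fps_X ^ 2)) * g) $ n =
          (\<Sum>i=0..n. if even i then f $ (i div 2) * c ^ (i div 2) * g $ (n - i) else 0)"
    by (auto simp: fps_mult_nth fps_compose_const_X2_nth intro!: sum.cong)
  then show ?thesis
    by (simp add: sum_even_indices)
qed

lemma power_one_plus_const_X2:
  fixes c :: "'a::field_char_0"
  shows "(1 + fps_const c * fps_X ^ 2) ^ n = fps_binomial (of_nat n) oo (fps_const c * fps_X ^ 2)"
  by (simp add: fps_binomial_of_nat fps_compose_add_distrib flip: fps_compose_power)

lemma inverse_power_one_plus_const_X2:
  fixes c :: "'a::field_char_0"
  shows "inverse ((1 + fps_const c * fps_X ^ 2) ^ n) =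
           fps_binomial (- of_nat n) oo (fps_const c * fps_X ^ 2)"
  by (simp add: fps_binomial_minus_of_nat fps_inverse_compose power_one_plus_const_X2
           fps_binomial_of_nat flip: fps_compose_power)

lemma fps_prod_one_plus_const_X_nth:
  fixes c :: "'b \<Rightarrow> 'a::comm_ring_1"
  assumes "finite A"
  shows "(\<Prod>i\<in>A. 1 + fps_const (c i) * fps_X) $ k =
           (\<Sum>S | S \<subseteq> A \<and> card S = k. \<Prod>i\<in>S. c i)"
proof -
  have "(\<Prod>i\<in>A. 1 + fps_const (c i) * fps_X) = (\<Prod>i\<in>A. fps_const (c i) * fps_X + 1)"
    by (simp add: add.commute)
  also have "\<dots> = (\<Sum>S\<in>Pow A. (\<Prod>i\<in>S. fps_const (c i) * fps_X) * (\<Prod>i\<in>A-S. 1))"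
    by (rule prod_add[OF assms])
  also have "\<dots> = (\<Sum>S\<in>Pow A. fps_const (\<Prod>i\<in>S. c i) * fps_X ^ card S)"
  proof (intro sum.cong refl)
    fix S assume "S \<in> Pow A"
    then have "finite S" using assms finite_subset by blast
    then show "(\<Prod>i\<in>S. fps_const (c i) * fps_X) * (\<Prod>i\<in>A-S. 1) =
                 fps_const (\<Prod>i\<in>S. c i) * fps_X ^ card S"
      by (induction S rule: finite_induct) (simp_all add: mult_ac flip: fps_const_mult)
  qed
  finally have "(\<Prod>i\<in>A. 1 + fps_const (c i) * fps_X) $ k =
                  (\<Sum>S\<in>Pow A. if card S = k then \<Prod>i\<in>S. c i else 0)"
    by (auto simp: fps_sum_nth intro!: sum.cong)
  also have "\<dots> = (\<Sum>S\<in>{S\<in>Pow A. card S = k}. \<Prod>i\<in>S. c i)"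
    by (rule sum.inter_filter[symmetric]) (simp add: assms)
  also have "{S\<in>Pow A. card S = k} = {S. S \<subseteq> A \<and> card S = k}"
    by auto
  finally show ?thesis .
qed

lemma of_int_sigma:
  "of_int (sigma k j) = (\<Sum>S | S \<subseteq> {1..j-1} \<and> card S = k. \<Prod>i\<in>S. of_nat i :: 'a::comm_ring_1)"
proof -
  consider "k = 0" | "0 < k" "k \<le> j - 1" | "j - 1 < k"
    by linarith
  then show ?thesis
  proof cases
    case 1
    then have "{S. S \<subseteq> {1..j-1} \<and> card S = k} = {{}}"
      by (auto dest: finite_subset)
    with 1 show ?thesis
      by (simp add: sigma_def)
  next
    case 2
    then show ?thesis
      by (simp add: sigma_def)
  next
    case 3
    then have "card {S. S \<subseteq> {1..j-1} \<and> card S = k} = 0"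
      by (simp add: n_subsets)
    then have "{S. S \<subseteq> {1..j-1} \<and> card S = k} = {}"
      by (simp add: card_eq_0_iff)
    moreover have "sigma k j = 0"
      using 3 by (simp add: sigma_def)
    ultimately show ?thesis
      by (metis of_int_0 sum.empty)
  qed
qed

lemma prod_one_plus_of_nat_X_nth:
  "(\<Prod>i\<in>{1..j-1}. 1 + of_nat i * fps_X :: 'a::comm_ring_1 fps) $ k = of_int (sigma k j)"
  using fps_prod_one_plus_const_X_nth[of "{1..j-1}" "of_nat :: nat \<Rightarrow> 'a" k]
  by (simp add: of_int_sigma fps_of_nat)

lemma prod_one_minus_of_nat_X_nth:
  "(\<Prod>i\<in>{1..j-1}. 1 - of_nat i * fps_X :: 'a::idom fps) $ k = (-1) ^ k * of_int (sigma k j)"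
proof -
  have "(\<Prod>i\<in>{1..j-1}. 1 - of_nat i * fps_X :: 'a fps) =
          (\<Prod>i\<in>{1..j-1}. 1 + of_nat i * fps_X) oo - fps_X"
    by (simp add: fps_compose_prod_distrib fps_compose_add_distrib fps_compose_mult_distrib
          flip: fps_of_nat)
  then show ?thesis
    unfolding fps_compose_uminus' prod_one_plus_of_nat_X_nth by simp
qed

lemma inverse_prod_one_plus_of_nat_X:
  "inverse (\<Prod>i\<in>{1..j-1}. 1 + of_nat i * fps_X :: 'a::field fps) = Abs_fps (\<lambda>k. of_int (Q k j))"
proof (rule fps_inverse_unique, rule fps_ext)
  fix n
  let ?P = "\<Prod>i\<in>{1..j-1}. 1 + of_nat i * fps_X :: 'a fps"
  have "(?P * Abs_fps (\<lambda>k. of_int (Q k j))) $ n = of_int (\<Sum>i=0..n. sigma i j * Q (n - i) j)"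
    unfolding fps_mult_nth prod_one_plus_of_nat_X_nth by simp
  also have "(\<Sum>i=0..n. sigma i j * Q (n - i) j) = (if n = 0 then 1 else 0)"
  proof (cases n)
    case (Suc k)
    have "(\<Sum>i=0..Suc k. sigma i j * Q (Suc k - i) j) =
            Q (Suc k) j + (\<Sum>i=1..Suc k. sigma i j * Q (Suc k - i) j)"
      by (simp add: sum.atLeast_Suc_atMost sigma_def)
    with Suc show ?thesis
      by simp
  qed (simp add: sigma_def)
  finally show "(?P * Abs_fps (\<lambda>k. of_int (Q k j))) $ n = (1 :: 'a fps) $ n"
    by simp
qed

lemma prod_lessThan_eq_prod_atLeastAtMost_pred:
  fixes f :: "nat \<Rightarrow> 'a::comm_monoid_mult"
  assumes "f 0 = 1"
  shows "(\<Prod>i<j. f i) = (\<Prod>i\<in>{1..j-1}. f i)"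
proof (cases j)
  case (Suc n)
  then have "{..<j} = insert 0 {1..j-1}"
    by auto
  with assms show ?thesis
    by simp
qed simp

lemma prod_const_X2_divide_one_plus_of_nat_X:
  fixes c :: "'a::field_char_0"
  shows "(\<Prod>i<j. (1 + fps_const c * fps_X ^ 2) / (1 + of_nat i * fps_X)) =
           (fps_binomial (of_nat j) oo (fps_const c * fps_X ^ 2)) * Abs_fps (\<lambda>k. of_int (Q k j))"
proof -
  have "(\<Prod>i<j. (1 + fps_const c * fps_X ^ 2) / (1 + of_nat i * fps_X)) =
          (1 + fps_const c * fps_X ^ 2) ^ j * inverse (\<Prod>i<j. 1 + of_nat i * fps_X)"
    by (simp add: fps_divide_unit prod.distrib inverse_prod_fps)
  also have "(\<Prod>i<j. 1 + of_nat i * fps_X :: 'a fps) = (\<Prod>i\<in>{1..j-1}. 1 + of_nat i * fps_X)"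
    by (rule prod_lessThan_eq_prod_atLeastAtMost_pred) simp
  finally show ?thesis
    by (simp only: power_one_plus_const_X2 inverse_prod_one_plus_of_nat_X)
qed

lemma prod_one_plus_of_int_X_divide_const_X2:
  fixes c :: "'a::field_char_0"
  shows "(\<Prod>i\<in>{-int n..-1}. (1 + of_int i * fps_X) / (1 + fps_const c * fps_X ^ 2)) =
           (fps_binomial (- of_nat n) oo (fps_const c * fps_X ^ 2)) *
           (\<Prod>k\<in>{1..n}. 1 - of_nat k * fps_X)"
proof -
  have "{-int n..-1} = (\<lambda>k. - int k) ` {1..n}"
  proof (intro equalityI subsetI)
    fix i assume "i \<in> {-int n..-1}"
    then have "i = - int (nat (- i))" "nat (- i) \<in> {1..n}"
      by auto
    then show "i \<in> (\<lambda>k. - int k) ` {1..n}"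
      by blast
  qed auto
  then have "(\<Prod>i\<in>{-int n..-1}. (1 + of_int i * fps_X) / (1 + fps_const c * fps_X ^ 2)) =
               (\<Prod>k\<in>{1..n}. (1 - of_nat k * fps_X) * inverse (1 + fps_const c * fps_X ^ 2))"
    by (simp add: prod.reindex inj_on_def fps_divide_unit)
  also have "\<dots> = inverse ((1 + fps_const c * fps_X ^ 2) ^ n) * (\<Prod>k\<in>{1..n}. 1 - of_nat k * fps_X)"
    by (simp add: prod.distrib fps_inverse_power mult.commute)
  finally show ?thesis
    by (simp only: inverse_power_one_plus_const_X2)
qed

theorem lemma2p3:
  fixes a :: "'a :: field_char_0" and j :: nat
  assumes "j \<ge> 1"
  defines "G \<equiv> (\<Prod>i<j. (1 + fps_const a * fps_X ^ 2) / (1 + of_nat i * fps_X))"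
      and "H \<equiv> (\<Prod>i \<in> {1 - int j .. -1}. (1 + of_int i * fps_X) / (1 + fps_const a * fps_X ^ 2))"
  shows "\<forall>N. fps_nth G N = (\<Sum>m = 0..N div 2. of_nat (j choose m) * of_int (Q (N - 2*m) j) * a ^ m)
             \<and> fps_nth H N = (\<Sum>m = 0..N div 2. (-1) ^ N * (of_int (1 - int j) gchoose m)
                                     * of_int (sigma (N - 2*m) j) * a ^ m)"
proof (intro allI conjI)
  fix N
  have minus_j: "1 - int j = - int (j - 1)"
    using assms(1) by simp
  have H: "H = (fps_binomial (of_int (1 - int j)) oo (fps_const a * fps_X ^ 2)) *
                 (\<Prod>k\<in>{1..j-1}. 1 - of_nat k * fps_X)"
    unfolding H_def minus_j of_int_minus of_int_of_nat_eq
    by (rule prod_one_plus_of_int_X_divide_const_X2)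
  show "G $ N = (\<Sum>m = 0..N div 2. of_nat (j choose m) * of_int (Q (N - 2*m) j) * a ^ m)"
    unfolding G_def prod_const_X2_divide_one_plus_of_nat_X fps_mult_compose_const_X2_nth fps_binomial_nth
    by (intro sum.cong refl) (simp add: binomial_gbinomial mult_ac)
  show "H $ N = (\<Sum>m = 0..N div 2. (-1) ^ N * (of_int (1 - int j) gchoose m)
                   * of_int (sigma (N - 2*m) j) * a ^ m)"
    unfolding H fps_mult_compose_const_X2_nth fps_binomial_nth prod_one_minus_of_nat_X_nth
  proof (intro sum.cong refl)
    fix m assume "m \<in> {0..N div 2}"
    then have "(-1 :: 'a) ^ (N - 2*m) = (-1) ^ N"
      by (auto simp: power_diff power_mult)
    then show "(of_int (1 - int j) gchoose m) * a ^ m * ((-1) ^ (N - 2*m) * of_int (sigma (N - 2*m) j))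
                 = (-1) ^ N * (of_int (1 - int j) gchoose m) * of_int (sigma (N - 2*m) j) * a ^ m"
      by (simp only: mult_ac)
  qed
qed

end
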